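(* There is a numerical constant $c>0$ such that the following holds. Let $V$ be a real $2\pi$-periodic function with $\Vert V\Vert_0<\infty$ and $\widehat V(0)=0$, let $n\ge0$ and $l\ge0$ be integers with $2n+l\ge1$, and let $I_l:=\frac l2+[-\frac14,\frac14)$. Then for all $s_1<s_2$ in $I_l$, $$\Big\Vert\int_{s_1}^{s_2}P_n\,U_0(t)^\ast\,\mathbb{V}\,U_0(t)\,\mathbb{P}_{n,l}\,\Omega(t)\,dt\Big\Vert\le c\sqrt{1+\Vert V\Vert_0}\,\frac{|\widehat V(2n+l)|}{\sqrt{2n+l}},$$ where the norm is the operator norm on $L^2(\mathbb{Z})$.
   Context: $\widehat V(m):=\frac{1}{\sqrt{2\pi}}\int_0^{2\pi}e^{-imx}V(x)\,dx$, $\Vert V\Vert_0^2:=\sum_m|\widehat V(m)|^2$. On $L^2(\mathbb{Z})$: $\mathbb{V}$ is the convolution operator $(\mathbb{V}\psi)(m)=\frac{1}{\sqrt{2\pi}}\sum_{j}\widehat V(m-j)\psi(j)$; $E_m(t):=(m+t)^2$; $H_0(t)$ is multiplication by $E_m(t)$, i.e. $H_0(t)\psi(m)=E_m(t)\psi(m)$, and $H(t)=H_0(t)+\mathbb{V}$. $U_0(t)$ and $U(t)$ are the unitary propagators from time $0$ to $t$ generated by $H_0(t)$ and $H(t)$ ($i\partial_tU(t)=H(t)U(t)$, $U(0)=I$), and $\Omega(t):=U_0(t)^\ast U(t)$. $P_m$ is the orthogonal projection onto the site $m$, and $\mathbb{P}_{n,l}:=P_n+P_{-n-l}$. *)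

theory Defs
  imports "HOL-Analysis.Analysis"
begin

text \<open>Operators are functions vec => vec, only their behaviour on ell2 matters.\<close>

type_synonym vec = "int \<Rightarrow> complex"

definition ell2 :: "vec set" where
  "ell2 = {\<psi>. (\<lambda>m. (cmod (\<psi> m))\<^sup>2) summable_on UNIV}"

definition l2inner :: "vec \<Rightarrow> vec \<Rightarrow> complex" where
  "l2inner \<phi> \<psi> = (\<Sum>\<^sub>\<infinity>m. cnj (\<phi> m) * \<psi> m)"

definition l2norm :: "vec \<Rightarrow> real" where
  "l2norm \<psi> = sqrt (\<Sum>\<^sub>\<infinity>m. (cmod (\<psi> m))\<^sup>2)"

definition basis :: "int \<Rightarrow> vec" where
  "basis j = (\<lambda>m. if m = j then 1 else 0)"

definition unitary_op :: "(vec \<Rightarrow> vec) \<Rightarrow> bool" where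
  "unitary_op A \<longleftrightarrow> bij_betw A ell2 ell2 \<and>
     (\<forall>\<phi>\<in>ell2. \<forall>\<psi>\<in>ell2. l2inner (A \<phi>) (A \<psi>) = l2inner \<phi> \<psi>)"

definition adj :: "(vec \<Rightarrow> vec) \<Rightarrow> vec \<Rightarrow> vec" where
  "adj A \<psi> = (THE \<phi>. \<phi> \<in> ell2 \<and> (\<forall>w\<in>ell2. l2inner \<phi> w = l2inner \<psi> (A w)))"

definition Vhat :: "(real \<Rightarrow> real) \<Rightarrow> int \<Rightarrow> complex" where
  "Vhat V m = complex_of_real (1 / sqrt (2 * pi)) *
     integral {0..2*pi} (\<lambda>x. exp (- \<i> * of_int m * of_real x) * of_real (V x))"

definition norm0 :: "(real \<Rightarrow> real) \<Rightarrow> real" where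
  "norm0 V = sqrt (\<Sum>\<^sub>\<infinity>m. (cmod (Vhat V m))\<^sup>2)"

definition Vop :: "(real \<Rightarrow> real) \<Rightarrow> vec \<Rightarrow> vec" where
  "Vop V \<psi> = (\<lambda>m. complex_of_real (1 / sqrt (2 * pi)) * (\<Sum>\<^sub>\<infinity>j. Vhat V (m - j) * \<psi> j))"

definition Em :: "int \<Rightarrow> real \<Rightarrow> real" where
  "Em m t = (real_of_int m + t)\<^sup>2"

definition H0 :: "real \<Rightarrow> vec \<Rightarrow> vec" where
  "H0 t \<psi> = (\<lambda>m. complex_of_real (Em m t) * \<psi> m)"

definition Hop :: "(real \<Rightarrow> real) \<Rightarrow> real \<Rightarrow> vec \<Rightarrow> vec" where
  "Hop V t \<psi> = (\<lambda>m. H0 t \<psi> m + Vop V \<psi> m)"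

text \<open>U is the unitary propagator (from time 0 to t) generated by H:
  i d/dt U(t) = H(t) U(t), U(0) = I, the equation understood weakly against
  the basis vectors (which lie in the domain of H(t)):
  i d/dt <e_j, U(t) psi> = <H(t) e_j, U(t) psi>.\<close>
definition propagator :: "(real \<Rightarrow> vec \<Rightarrow> vec) \<Rightarrow> (real \<Rightarrow> vec \<Rightarrow> vec) \<Rightarrow> bool" where
  "propagator H U \<longleftrightarrow> (\<forall>t. unitary_op (U t)) \<and> (\<forall>\<psi>\<in>ell2. U 0 \<psi> = \<psi>) \<and>
     (\<forall>\<psi>\<in>ell2. \<forall>j t. ((\<lambda>s. U s \<psi> j) has_vector_derivative
         (- \<i> * l2inner (H t (basis j)) (U t \<psi>))) (at t))"

definition Pm :: "int \<Rightarrow> vec \<Rightarrow> vec" where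
  "Pm m \<psi> = (\<lambda>k. if k = m then \<psi> m else 0)"

definition Pnl :: "int \<Rightarrow> int \<Rightarrow> vec \<Rightarrow> vec" where
  "Pnl n l \<psi> = (\<lambda>k. Pm n \<psi> k + Pm (- n - l) \<psi> k)"

end

theory Submission
  imports Defs
begin

(* Conjugation by the free propagator, which acts diagonally by the phases
   exp (-i (integral of E_m over [0, t])), reduces the integrand to a single matrix element:
   P_{n,l} keeps the sites n and -n-l, the diagonal coupling vanishes because Vhat 0 = 0, and
   what remains is the coupling Vhat (2n+l) from -n-l to n.  The integrand is therefore a
   constant of modulus at most |Vhat (2n+l)| times exp (i N (t - l/2)^2) w t, where N = 2n+l and
   w, an interaction-picture coefficient, is bounded by 1 and has derivative bounded by ||V||_0.
   Such a chirp integral is estimated as in van der Corput's lemma: trivially on a window of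
   width 2 delta around the stationary point l/2, and by one integration by parts outside it;
   delta = sqrt ((1 + ||V||_0) / N) gives the bound 5 sqrt (1 + ||V||_0) / sqrt N. *)

section \<open>Chirp integrals\<close>

lemma chirp_has_vector_derivative:
  fixes N x0 t :: real
  shows "((\<lambda>s. exp (\<i> * of_real (N * (s - x0)\<^sup>2))) has_vector_derivative
          \<i> * of_real (2 * N * (t - x0)) * exp (\<i> * of_real (N * (t - x0)\<^sup>2))) (at t)"
proof -
  have "((\<lambda>z. exp (\<i> * (of_real N * (z - of_real x0)\<^sup>2))) has_field_derivative
          exp (\<i> * (of_real N * (of_real t - of_real x0)\<^sup>2)) * (\<i> * (of_real N * (2 * (of_real t - of_real x0)))))
        (at (of_real t))"
    by (auto intro!: derivative_eq_intros)
  from has_vector_derivative_real_field[OF this] show ?thesis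
    by (simp add: algebra_simps)
qed

lemma norm_integral_le_by_parts:
  fixes h g \<Phi> :: "real \<Rightarrow> 'a::banach" and \<phi> \<phi>' :: "real \<Rightarrow> real"
  assumes ab: "a < b"
    and h: "continuous_on {a..b} h" and \<Phi>: "continuous_on {a..b} \<Phi>" and \<phi>: "continuous_on {a..b} \<phi>"
    and \<Phi>': "\<And>t. a < t \<Longrightarrow> t < b \<Longrightarrow> (\<Phi> has_vector_derivative h t + g t) (at t)"
    and \<phi>': "\<And>t. a < t \<Longrightarrow> t < b \<Longrightarrow> (\<phi> has_real_derivative \<phi>' t) (at t)"
    and g: "\<And>t. a < t \<Longrightarrow> t < b \<Longrightarrow> norm (g t) \<le> \<phi>' t"
  shows "norm (integral {a..b} h) \<le> norm (\<Phi> a) + norm (\<Phi> b) + (\<phi> b - \<phi> a)"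
proof -
  define R where "R t = integral {a..t} h - \<Phi> t" for t
  have "norm (R b - R a) \<le> \<phi> b - \<phi> a"
  proof (rule differentiable_bound_general[OF ab _ \<phi>])
    show "continuous_on {a..b} R"
      unfolding R_def[abs_def]
      by (intro continuous_intros \<Phi> indefinite_integral_continuous_1 integrable_continuous_interval h)
    fix t assume t: "a < t" "t < b"
    have "((\<lambda>u. integral {a..u} h) has_vector_derivative h t) (at t)"
      using integral_has_vector_derivative[OF h, of t] t by (simp add: at_within_Icc_at)
    from has_vector_derivative_diff[OF this \<Phi>'[OF t]]
    show "(R has_vector_derivative - g t) (at t)"
      unfolding R_def[abs_def] by simp
    show "(\<phi> has_vector_derivative \<phi>' t) (at t)"
      using \<phi>'[OF t] by (simp add: has_real_derivative_iff_has_vector_derivative)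
    show "norm (- g t) \<le> \<phi>' t"
      using g[OF t] by simp
  qed
  moreover have "integral {a..b} h = (R b - R a) + \<Phi> b - \<Phi> a"
    by (simp add: R_def)
  ultimately show ?thesis
    by (smt (verit) norm_triangle_ineq norm_triangle_ineq4)
qed

lemma chirp_over_linear_has_vector_derivative:
  fixes w :: "real \<Rightarrow> complex"
  assumes N: "N \<noteq> 0" and t: "t \<noteq> x0" and w': "(w has_vector_derivative w') (at t)"
  shows "((\<lambda>s. exp (\<i> * of_real (N * (s - x0)\<^sup>2)) * w s / (2 * \<i> * of_real (N * (s - x0))))
      has_vector_derivative exp (\<i> * of_real (N * (t - x0)\<^sup>2)) * w t
        + exp (\<i> * of_real (N * (t - x0)\<^sup>2)) * (w' - w t / of_real (t - x0)) / (2 * \<i> * of_real (N * (t - x0))))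
      (at t)"
proof -
  define E where "E t = exp (\<i> * of_real (N * (t - x0)\<^sup>2))" for t
  have "((\<lambda>z. 1 / (2 * \<i> * (of_real N * (z - of_real x0)))) has_field_derivative
      - 1 / (2 * \<i> * of_real N * (of_real t - of_real x0)\<^sup>2)) (at (of_real t))"
    using N t by (auto intro!: derivative_eq_intros simp: divide_simps power2_eq_square)
  from has_vector_derivative_real_field[OF this]
  have "((\<lambda>s. 1 / (2 * \<i> * of_real (N * (s - x0)))) has_vector_derivative
      - 1 / (2 * \<i> * of_real N * (of_real t - of_real x0)\<^sup>2)) (at t)"
    by simp
  from has_vector_derivative_mult[OF has_vector_derivative_mult[OF
        chirp_has_vector_derivative w'] this]
  have "((\<lambda>s. E s * w s * (1 / (2 * \<i> * of_real (N * (s - x0))))) has_vector_derivative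
      E t * w t * (- 1 / (2 * \<i> * of_real N * (of_real t - of_real x0)\<^sup>2))
        + (E t * w' + \<i> * of_real (2 * N * (t - x0)) * E t * w t) * (1 / (2 * \<i> * of_real (N * (t - x0)))))
      (at t)"
    unfolding E_def .
  moreover have "E t * w t * (- 1 / (2 * \<i> * of_real N * (of_real t - of_real x0)\<^sup>2))
        + (E t * w' + \<i> * of_real (2 * N * (t - x0)) * E t * w t) * (1 / (2 * \<i> * of_real (N * (t - x0))))
      = E t * w t + E t * (w' - w t / of_real (t - x0)) / (2 * \<i> * of_real (N * (t - x0)))"
  proof -
    have "e * v * (- 1 / (2 * \<i> * n * d\<^sup>2)) + (e * v' + \<i> * (2 * n * d) * e * v) * (1 / (2 * \<i> * (n * d)))
        = e * v + e * (v' - v / d) / (2 * \<i> * (n * d))" if "n \<noteq> 0" "d \<noteq> 0" for e v v' n d :: complex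
      using that by (simp add: field_simps power2_eq_square)
    from this[of "of_real N" "of_real (t - x0)" "E t" "w t" w'] show ?thesis
      using N t by simp
  qed
  ultimately show ?thesis
    unfolding E_def by simp
qed

lemma diff_inverse_le_of_far:
  fixes a b x0 \<delta> :: real
  assumes "\<delta> > 0" "a < b" "x0 + \<delta> \<le> a \<or> b \<le> x0 - \<delta>"
  shows "1 / (a - x0) - 1 / (b - x0) \<le> 1 / \<delta>"
  using assms(3)
proof
  assume "x0 + \<delta> \<le> a"
  then show ?thesis
    using assms(1,2) by (smt (verit) divide_pos_pos frac_le)
next
  assume "b \<le> x0 - \<delta>"
  then have "1 / (x0 - b) - 1 / (x0 - a) \<le> 1 / \<delta>"
    using assms(1,2) by (smt (verit) divide_pos_pos frac_le)
  then show ?thesis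
    by (smt (verit) divide_minus_right minus_diff_eq)
qed

lemma norm_chirp_over_linear_remainder_le:
  fixes v v' :: complex
  assumes N: "N > 0" and \<delta>: "\<delta> > 0" "\<delta> \<le> \<bar>t - x0\<bar>" and v: "norm v \<le> 1" and v': "norm v' \<le> K"
  shows "norm (exp (\<i> * of_real (N * (t - x0)\<^sup>2)) * (v' - v / of_real (t - x0))
      / (2 * \<i> * of_real (N * (t - x0)))) \<le> (K / \<delta> + 1 / (t - x0)\<^sup>2) / (2 * N)"
    (is "norm ?g \<le> _")
proof -
  define r where "r = \<bar>t - x0\<bar>"
  have r: "r > 0" "\<delta> \<le> r" "(t - x0)\<^sup>2 = r\<^sup>2"
    using \<delta> by (auto simp: r_def)
  have "norm (v' - v / of_real (t - x0)) \<le> K + 1 / r"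
    using norm_triangle_ineq4[of v' "v / of_real (t - x0)"] v v' r(1)
    by (simp add: norm_divide r_def del: of_real_diff) (smt (verit) divide_right_mono)
  moreover have "norm ?g = norm (v' - v / of_real (t - x0)) / (2 * N * r)"
    using N by (simp add: norm_mult norm_divide mult.assoc r_def del: of_real_diff)
  ultimately have "norm ?g \<le> (K + 1 / r) / (2 * N * r)"
    using N r by (simp add: divide_right_mono)
  also have "\<dots> = (K / r + 1 / r\<^sup>2) / (2 * N)"
    using r(1) by (simp add: field_simps power2_eq_square)
  also have "\<dots> \<le> (K / \<delta> + 1 / r\<^sup>2) / (2 * N)"
    using N r \<delta> order_trans[OF norm_ge_zero v']
    by (intro divide_right_mono add_right_mono divide_left_mono) auto
  finally show ?thesis
    unfolding r(3) .
qed

lemma chirp_integral_bound_off_stationary: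
  fixes w w' :: "real \<Rightarrow> complex" and N x0 \<delta> K a b :: real
  assumes N: "N > 0" and \<delta>: "\<delta> > 0" and K: "K \<ge> 0" and ab: "a < b"
    and far: "x0 + \<delta> \<le> a \<or> b \<le> x0 - \<delta>"
    and w': "\<And>t. (w has_vector_derivative w' t) (at t)"
    and w_le: "\<And>t. norm (w t) \<le> 1" and w'_le: "\<And>t. norm (w' t) \<le> K"
  shows "norm (integral {a..b} (\<lambda>t. exp (\<i> * of_real (N * (t - x0)\<^sup>2)) * w t))
           \<le> (3 + K * (b - a)) / (2 * N * \<delta>)"
proof -
  define E where "E t = exp (\<i> * of_real (N * (t - x0)\<^sup>2))" for t
  define \<Phi> where "\<Phi> t = E t * w t / (2 * \<i> * of_real (N * (t - x0)))" for t
  define \<phi> where "\<phi> t = (K / \<delta> * t - 1 / (t - x0)) / (2 * N)" for t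
  have dist: "t \<noteq> x0" "\<delta> \<le> \<bar>t - x0\<bar>" if "t \<in> {a..b}" for t
    using that far \<delta> by auto
  have cont_w: "continuous_on S w" for S
    using w' by (meson continuous_on_vector_derivative has_vector_derivative_at_within)
  have \<Phi>_le: "norm (\<Phi> t) \<le> 1 / (2 * N * \<delta>)" if "t \<in> {a..b}" for t
  proof -
    have "norm (\<Phi> t) = norm (w t) / (2 * N * \<bar>t - x0\<bar>)"
      using N by (simp add: \<Phi>_def E_def norm_mult norm_divide del: of_real_diff)
    also have "\<dots> \<le> 1 / (2 * N * \<delta>)"
      using w_le[of t] dist[OF that] N \<delta> by (intro frac_le) auto
    finally show ?thesis .
  qed
  have "norm (integral {a..b} (\<lambda>t. E t * w t)) \<le> norm (\<Phi> a) + norm (\<Phi> b) + (\<phi> b - \<phi> a)"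
  proof (rule norm_integral_le_by_parts[OF ab,
        where g = "\<lambda>t. E t * (w' t - w t / of_real (t - x0)) / (2 * \<i> * of_real (N * (t - x0)))"])
    show "continuous_on {a..b} (\<lambda>t. E t * w t)"
      unfolding E_def by (intro continuous_intros cont_w)
    show "continuous_on {a..b} \<Phi>"
      unfolding \<Phi>_def E_def using dist N by (intro continuous_intros cont_w) auto
    show "continuous_on {a..b} \<phi>"
      unfolding \<phi>_def using dist N \<delta> by (intro continuous_intros) auto
    fix t assume "a < t" "t < b"
    then have t: "t \<noteq> x0" "\<delta> \<le> \<bar>t - x0\<bar>"
      using dist by auto
    show "(\<Phi> has_vector_derivative E t * w t
        + E t * (w' t - w t / of_real (t - x0)) / (2 * \<i> * of_real (N * (t - x0)))) (at t)"
      unfolding \<Phi>_def[abs_def] E_def using chirp_over_linear_has_vector_derivative[OF _ t(1) w'] N by simp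
    have "((\<lambda>t. 1 / (t - x0)) has_real_derivative - 1 / (t - x0)\<^sup>2) (at t)"
      using t by (auto intro!: derivative_eq_intros simp: power2_eq_square)
    then have "(\<phi> has_real_derivative (K / \<delta> * 1 - - 1 / (t - x0)\<^sup>2) / (2 * N)) (at t)"
      unfolding \<phi>_def[abs_def] by (intro DERIV_cdivide DERIV_diff DERIV_cmult DERIV_ident)
    then show "(\<phi> has_real_derivative (K / \<delta> + 1 / (t - x0)\<^sup>2) / (2 * N)) (at t)"
      by simp
    show "norm (E t * (w' t - w t / of_real (t - x0)) / (2 * \<i> * of_real (N * (t - x0))))
        \<le> (K / \<delta> + 1 / (t - x0)\<^sup>2) / (2 * N)"
      unfolding E_def by (rule norm_chirp_over_linear_remainder_le[OF N \<delta> t(2) w_le w'_le])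
  qed
  moreover have "norm (\<Phi> a) \<le> 1 / (2 * N * \<delta>)" "norm (\<Phi> b) \<le> 1 / (2 * N * \<delta>)"
    using \<Phi>_le ab by simp_all
  moreover have "\<phi> b - \<phi> a \<le> (1 + K * (b - a)) / (2 * N * \<delta>)"
  proof -
    have "\<phi> b - \<phi> a \<le> (K / \<delta> * (b - a) + 1 / \<delta>) / (2 * N)"
      unfolding \<phi>_def diff_divide_distrib[symmetric] using diff_inverse_le_of_far[OF \<delta> ab far] N
      by (intro divide_right_mono) (auto simp: algebra_simps diff_divide_distrib)
    also have "\<dots> = (1 + K * (b - a)) / (2 * N * \<delta>)"
      using \<delta> by (simp add: field_simps)
    finally show ?thesis .
  qed
  moreover have "1 / (2 * N * \<delta>) + 1 / (2 * N * \<delta>) + (1 + K * (b - a)) / (2 * N * \<delta>)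
      = (3 + K * (b - a)) / (2 * N * \<delta>)"
    using N \<delta> by (simp add: field_simps)
  ultimately show ?thesis
    unfolding E_def by linarith
qed

lemma chirp_integral_bound_off_window:
  fixes w w' :: "real \<Rightarrow> complex" and N x0 \<delta> K a b :: real
  assumes N: "N > 0" and \<delta>: "\<delta> > 0" and K: "K \<ge> 0" and ab: "a \<le> b" "b - a \<le> 1"
    and far: "x0 + \<delta> \<le> a \<or> b \<le> x0 - \<delta> \<or> a = b"
    and w': "\<And>t. (w has_vector_derivative w' t) (at t)"
    and w_le: "\<And>t. norm (w t) \<le> 1" and w'_le: "\<And>t. norm (w' t) \<le> K"
  shows "norm (integral {a..b} (\<lambda>t. exp (\<i> * of_real (N * (t - x0)\<^sup>2)) * w t)) \<le> (3 + K) / (2 * N * \<delta>)"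
proof (cases "a = b")
  case True
  then show ?thesis
    using N \<delta> K by simp
next
  case False
  with ab far have "a < b" "x0 + \<delta> \<le> a \<or> b \<le> x0 - \<delta>"
    by auto
  from chirp_integral_bound_off_stationary[OF N \<delta> K this w' w_le w'_le]
  have "norm (integral {a..b} (\<lambda>t. exp (\<i> * of_real (N * (t - x0)\<^sup>2)) * w t))
      \<le> (3 + K * (b - a)) / (2 * N * \<delta>)" .
  also have "\<dots> \<le> (3 + K) / (2 * N * \<delta>)"
    using ab K N \<delta> by (intro divide_right_mono) (auto simp: mult_left_le)
  finally show ?thesis .
qed

lemma chirp_integral_bound:
  fixes w w' :: "real \<Rightarrow> complex" and N x0 K s1 s2 :: real
  assumes N: "N > 0" and K: "K \<ge> 0" and s: "s1 \<le> s2" "s2 - s1 \<le> 1"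
    and w': "\<And>t. (w has_vector_derivative w' t) (at t)"
    and w_le: "\<And>t. norm (w t) \<le> 1" and w'_le: "\<And>t. norm (w' t) \<le> K"
  shows "(\<lambda>t. exp (\<i> * of_real (N * (t - x0)\<^sup>2)) * w t) integrable_on {s1..s2}"
    and "norm (integral {s1..s2} (\<lambda>t. exp (\<i> * of_real (N * (t - x0)\<^sup>2)) * w t))
           \<le> 5 * sqrt (1 + K) / sqrt N"
proof -
  define h where "h t = exp (\<i> * of_real (N * (t - x0)\<^sup>2)) * w t" for t
  have "continuous_on S w" for S
    using w' by (meson continuous_on_vector_derivative has_vector_derivative_at_within)
  then have h_int: "h integrable_on {a..b}" for a b
    unfolding h_def by (intro integrable_continuous_interval continuous_intros)
  then show "(\<lambda>t. exp (\<i> * of_real (N * (t - x0)\<^sup>2)) * w t) integrable_on {s1..s2}"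
    unfolding h_def .
  \<comment> \<open>This width of the window around the stationary point balances the trivial bound \<open>2 * \<delta>\<close>
    inside it against the bound \<open>(3 + K) / (2 * N * \<delta>)\<close> on either side of it.\<close>
  define \<delta> where "\<delta> = sqrt ((1 + K) / N)"
  have \<delta>: "\<delta> > 0" "N * \<delta>\<^sup>2 = 1 + K"
    using N K by (simp_all add: \<delta>_def)
  define p where "p = max s1 (min s2 (x0 - \<delta>))"
  define q where "q = max p (min s2 (x0 + \<delta>))"
  have pq: "s1 \<le> p" "p \<le> q" "q \<le> s2" "q - p \<le> 2 * \<delta>"
    unfolding p_def q_def using s \<delta> by auto
  have "norm (integral {s1..p} h) \<le> (3 + K) / (2 * N * \<delta>)"
    unfolding h_def using pq s
    by (intro chirp_integral_bound_off_window[OF N \<delta>(1) K _ _ _ w' w_le w'_le]) (auto simp: p_def)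
  moreover have "norm (integral {q..s2} h) \<le> (3 + K) / (2 * N * \<delta>)"
    unfolding h_def using pq s
    by (intro chirp_integral_bound_off_window[OF N \<delta>(1) K _ _ _ w' w_le w'_le]) (auto simp: q_def)
  moreover have "norm (integral {p..q} h) \<le> 1 * Henstock_Kurzweil_Integration.content (cbox p q)"
    using h_int by (intro has_integral_bound[of 1 h _ p q]) (auto simp: h_def norm_mult w_le)
  moreover have "integral {s1..s2} h = integral {s1..p} h + integral {p..q} h + integral {q..s2} h"
    using pq h_int by (simp add: Henstock_Kurzweil_Integration.integral_combine)
  moreover have "(3 + K) / (2 * N * \<delta>) + (3 + K) / (2 * N * \<delta>) = (3 + K) / (N * \<delta>)"
    by (simp add: field_simps)
  ultimately have "norm (integral {s1..s2} h) \<le> 2 * \<delta> + (3 + K) / (N * \<delta>)"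
    using pq by (smt (verit) content_real norm_triangle_ineq box_real(2))
  also have "(3 + K) / (N * \<delta>) \<le> 3 * (N * \<delta>\<^sup>2) / (N * \<delta>)"
    unfolding \<delta>(2) using K N \<delta> by (intro divide_right_mono) auto
  also have "\<dots> = 3 * \<delta>"
    using N \<delta>(1) by (simp add: power2_eq_square)
  finally have "norm (integral {s1..s2} h) \<le> 5 * sqrt (1 + K) / sqrt N"
    by (simp add: \<delta>_def real_sqrt_divide)
  then show "norm (integral {s1..s2} (\<lambda>t. exp (\<i> * of_real (N * (t - x0)\<^sup>2)) * w t))
      \<le> 5 * sqrt (1 + K) / sqrt N"
    unfolding h_def .
qed

section \<open>Square-summable sequences\<close>

lemma infsum_eq_sum_support:
  fixes f :: "'a \<Rightarrow> 'b::{comm_monoid_add, t2_space}"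
  assumes "finite S" "\<And>x. x \<notin> S \<Longrightarrow> f x = 0"
  shows "infsum f UNIV = sum f S"
proof -
  have "infsum f UNIV = infsum f S"
    by (rule infsum_cong_neutral) (use assms in auto)
  then show ?thesis
    using assms(1) by simp
qed

lemma ell2_iff: "\<psi> \<in> ell2 \<longleftrightarrow> (\<lambda>m. (cmod (\<psi> m))\<^sup>2) summable_on UNIV"
  by (simp add: ell2_def)

lemma ell2_finite_support:
  assumes "finite S" "\<And>m. m \<notin> S \<Longrightarrow> \<psi> m = 0"
  shows "\<psi> \<in> ell2"
  unfolding ell2_iff
  by (rule finite_nonzero_values_imp_summable_on, rule finite_subset[OF _ assms(1)]) (use assms in auto)

lemma basis_ell2: "basis j \<in> ell2"
  by (rule ell2_finite_support[of "{j}"]) (auto simp: basis_def)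

lemma ell2_scale: "\<psi> \<in> ell2 \<Longrightarrow> (\<lambda>m. c * \<psi> m) \<in> ell2"
  unfolding ell2_iff by (simp add: norm_mult power_mult_distrib summable_on_cmult_right)

lemma ell2_mult_unimodular:
  "\<psi> \<in> ell2 \<Longrightarrow> (\<And>m. norm (c m) = 1) \<Longrightarrow> (\<lambda>m. c m * \<psi> m) \<in> ell2"
  unfolding ell2_iff by (simp add: norm_mult)

lemma ell2_add:
  assumes "\<phi> \<in> ell2" "\<psi> \<in> ell2"
  shows "(\<lambda>m. \<phi> m + \<psi> m) \<in> ell2"
  unfolding ell2_iff
proof (rule summable_on_comparison_test)
  show "(\<lambda>m. 2 * (cmod (\<phi> m))\<^sup>2 + 2 * (cmod (\<psi> m))\<^sup>2) summable_on UNIV"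
    using assms unfolding ell2_iff by (intro summable_on_add summable_on_cmult_right)
  fix m
  have "(cmod (\<phi> m + \<psi> m))\<^sup>2 \<le> (cmod (\<phi> m) + cmod (\<psi> m))\<^sup>2"
    by (intro power_mono norm_triangle_ineq) simp
  also have "\<dots> \<le> 2 * (cmod (\<phi> m))\<^sup>2 + 2 * (cmod (\<psi> m))\<^sup>2"
    using sum_squares_ge_zero[of "cmod (\<phi> m) - cmod (\<psi> m)" 0] by (simp add: power2_eq_square algebra_simps)
  finally show "(cmod (\<phi> m + \<psi> m))\<^sup>2 \<le> 2 * (cmod (\<phi> m))\<^sup>2 + 2 * (cmod (\<psi> m))\<^sup>2" .
qed simp

lemma summable_on_shift:
  fixes f :: "int \<Rightarrow> 'a::{comm_monoid_add, t2_space}"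
  shows "(\<lambda>m. f (m - k)) summable_on UNIV \<longleftrightarrow> f summable_on UNIV"
    and "infsum (\<lambda>m. f (m - k)) UNIV = infsum f UNIV"
proof -
  have bij: "bij_betw (\<lambda>m::int. m - k) UNIV UNIV"
    by (rule bij_betwI[where g = "\<lambda>m. m + k"]) auto
  show "(\<lambda>m. f (m - k)) summable_on UNIV \<longleftrightarrow> f summable_on UNIV"
    using summable_on_reindex_bij_betw[OF bij, of f] by (simp add: comp_def)
  show "infsum (\<lambda>m. f (m - k)) UNIV = infsum f UNIV"
    using infsum_reindex_bij_betw[OF bij, of f] by (simp add: comp_def)
qed

lemma ell2_shift: "\<psi> \<in> ell2 \<Longrightarrow> (\<lambda>m. \<psi> (m - k)) \<in> ell2"
  unfolding ell2_iff using summable_on_shift(1)[of "\<lambda>m. (cmod (\<psi> m))\<^sup>2" k] by simp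

lemma l2norm_nonneg: "0 \<le> l2norm \<psi>"
  by (simp add: l2norm_def infsum_nonneg)

lemma l2norm_square: "(l2norm \<psi>)\<^sup>2 = (\<Sum>\<^sub>\<infinity>m. (cmod (\<psi> m))\<^sup>2)"
  by (simp add: l2norm_def infsum_nonneg)

lemma norm_le_l2norm:
  assumes "\<psi> \<in> ell2"
  shows "cmod (\<psi> j) \<le> l2norm \<psi>"
proof -
  have "(cmod (\<psi> j))\<^sup>2 \<le> (\<Sum>\<^sub>\<infinity>m. (cmod (\<psi> m))\<^sup>2)"
    using infsum_mono_neutral[of "\<lambda>m. (cmod (\<psi> m))\<^sup>2" "{j}" "\<lambda>m. (cmod (\<psi> m))\<^sup>2" UNIV] assms
    by (simp add: ell2_iff)
  then show ?thesis
    by (simp add: l2norm_def real_le_rsqrt)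
qed

lemma l2norm_eq_0D:
  assumes "\<psi> \<in> ell2" "l2norm \<psi> = 0"
  shows "\<psi> m = 0"
  using norm_le_l2norm[OF assms(1), of m] assms(2) by simp

lemma l2inner_abs_summable:
  assumes "\<phi> \<in> ell2" "\<psi> \<in> ell2"
  shows "(\<lambda>m. cmod (cnj (\<phi> m) * \<psi> m)) summable_on UNIV"
proof (rule summable_on_comparison_test)
  show "(\<lambda>m. (cmod (\<phi> m))\<^sup>2 + (cmod (\<psi> m))\<^sup>2) summable_on UNIV"
    using assms unfolding ell2_iff by (intro summable_on_add)
  fix m
  have "2 * (cmod (\<phi> m) * cmod (\<psi> m)) \<le> (cmod (\<phi> m))\<^sup>2 + (cmod (\<psi> m))\<^sup>2"
    using sum_squares_ge_zero[of "cmod (\<phi> m) - cmod (\<psi> m)" 0] by (simp add: power2_eq_square algebra_simps)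
  moreover have "0 \<le> cmod (\<phi> m) * cmod (\<psi> m)"
    by simp
  ultimately have "cmod (\<phi> m) * cmod (\<psi> m) \<le> (cmod (\<phi> m))\<^sup>2 + (cmod (\<psi> m))\<^sup>2"
    by linarith
  then show "cmod (cnj (\<phi> m) * \<psi> m) \<le> (cmod (\<phi> m))\<^sup>2 + (cmod (\<psi> m))\<^sup>2"
    by (simp add: norm_mult)
qed simp

lemma norm_l2inner_le_weighted:
  assumes "\<phi> \<in> ell2" "\<psi> \<in> ell2" "L > 0"
  shows "cmod (l2inner \<phi> \<psi>) \<le> (l2norm \<phi>)\<^sup>2 / (2 * L) + L * (l2norm \<psi>)\<^sup>2 / 2"
proof -
  have sq: "(\<lambda>m. (cmod (\<phi> m))\<^sup>2) summable_on UNIV" "(\<lambda>m. (cmod (\<psi> m))\<^sup>2) summable_on UNIV"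
    using assms unfolding ell2_iff by auto
  have abs_summable: "(\<lambda>m. cmod (cnj (\<phi> m) * \<psi> m)) summable_on UNIV"
    by (rule l2inner_abs_summable[OF assms(1,2)])
  have "cmod (l2inner \<phi> \<psi>) \<le> (\<Sum>\<^sub>\<infinity>m. cmod (cnj (\<phi> m) * \<psi> m))"
    unfolding l2inner_def by (rule norm_infsum_bound[OF abs_summable])
  also have "\<dots> \<le> (\<Sum>\<^sub>\<infinity>m. 1 / (2 * L) * (cmod (\<phi> m))\<^sup>2 + L / 2 * (cmod (\<psi> m))\<^sup>2)"
  proof (rule infsum_mono[OF abs_summable])
    show "(\<lambda>m. 1 / (2 * L) * (cmod (\<phi> m))\<^sup>2 + L / 2 * (cmod (\<psi> m))\<^sup>2) summable_on UNIV"
      using sq by (intro summable_on_add summable_on_cmult_right)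
    fix m
    have "1 / (2 * L) * (cmod (\<phi> m))\<^sup>2 + L / 2 * (cmod (\<psi> m))\<^sup>2 - cmod (\<phi> m) * cmod (\<psi> m)
        = (cmod (\<phi> m) - L * cmod (\<psi> m))\<^sup>2 / (2 * L)"
      using assms(3) by (simp add: field_simps power2_eq_square)
    moreover have "0 \<le> (cmod (\<phi> m) - L * cmod (\<psi> m))\<^sup>2 / (2 * L)"
      using assms(3) by simp
    ultimately show "cmod (cnj (\<phi> m) * \<psi> m) \<le> 1 / (2 * L) * (cmod (\<phi> m))\<^sup>2 + L / 2 * (cmod (\<psi> m))\<^sup>2"
      by (simp add: norm_mult)
  qed
  also have "\<dots> = 1 / (2 * L) * (\<Sum>\<^sub>\<infinity>m. (cmod (\<phi> m))\<^sup>2)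
      + L / 2 * (\<Sum>\<^sub>\<infinity>m. (cmod (\<psi> m))\<^sup>2)"
    using sq by (simp only: infsum_add summable_on_cmult_right infsum_cmult_right)
  also have "\<dots> = (l2norm \<phi>)\<^sup>2 / (2 * L) + L * (l2norm \<psi>)\<^sup>2 / 2"
    by (simp add: l2norm_square)
  finally show ?thesis .
qed

lemma norm_l2inner_le:
  assumes "\<phi> \<in> ell2" "\<psi> \<in> ell2"
  shows "cmod (l2inner \<phi> \<psi>) \<le> l2norm \<phi> * l2norm \<psi>"
proof (cases "l2norm \<phi> = 0 \<or> l2norm \<psi> = 0")
  case True
  then have "l2inner \<phi> \<psi> = 0"
    using l2norm_eq_0D[OF assms(1)] l2norm_eq_0D[OF assms(2)] by (auto simp: l2inner_def)
  then show ?thesis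
    by (simp add: l2norm_nonneg)
next
  case False
  then have pos: "l2norm \<phi> > 0" "l2norm \<psi> > 0"
    using l2norm_nonneg by (auto simp: less_le)
  from norm_l2inner_le_weighted[OF assms divide_pos_pos[OF pos]]
  show ?thesis
    using pos by (simp add: field_simps power2_eq_square)
qed

lemma l2inner_basis_right: "l2inner \<phi> (basis k) = cnj (\<phi> k)"
  unfolding l2inner_def by (subst infsum_eq_sum_support[of "{k}"]) (auto simp: basis_def)

lemma l2inner_Pm: "l2inner \<phi> (Pm n \<psi>) = cnj (\<phi> n) * \<psi> n"
  unfolding l2inner_def by (subst infsum_eq_sum_support[of "{n}"]) (auto simp: Pm_def)

lemma l2inner_self:
  assumes "\<psi> \<in> ell2"
  shows "l2inner \<psi> \<psi> = of_real ((l2norm \<psi>)\<^sup>2)"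
proof -
  have "cnj (\<psi> m) * \<psi> m = of_real ((cmod (\<psi> m))\<^sup>2)" for m
    by (metis complex_norm_square mult.commute)
  then have "l2inner \<psi> \<psi> = (\<Sum>\<^sub>\<infinity>m. of_real ((cmod (\<psi> m))\<^sup>2))"
    unfolding l2inner_def by presburger
  also have "\<dots> = of_real (\<Sum>\<^sub>\<infinity>m. (cmod (\<psi> m))\<^sup>2)"
    using assms unfolding ell2_iff
    by (intro infsumI has_sum_of_real has_sum_infsum)
  finally show ?thesis
    by (simp add: l2norm_square)
qed

lemma unitary_op_ell2: "unitary_op A \<Longrightarrow> \<psi> \<in> ell2 \<Longrightarrow> A \<psi> \<in> ell2"
  unfolding unitary_op_def bij_betw_def by blast

lemma unitary_op_l2norm:
  assumes "unitary_op A" "\<psi> \<in> ell2"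
  shows "l2norm (A \<psi>) = l2norm \<psi>"
proof -
  have "l2inner (A \<psi>) (A \<psi>) = l2inner \<psi> \<psi>"
    using assms unfolding unitary_op_def by blast
  then have "(l2norm (A \<psi>))\<^sup>2 = (l2norm \<psi>)\<^sup>2"
    unfolding l2inner_self[OF unitary_op_ell2[OF assms]] l2inner_self[OF assms(2)] of_real_eq_iff .
  then show ?thesis
    by (simp add: l2norm_nonneg power2_eq_iff_nonneg)
qed

lemma adj_eqI:
  assumes "\<phi> \<in> ell2" "\<And>w. w \<in> ell2 \<Longrightarrow> l2inner \<phi> w = l2inner \<psi> (A w)"
  shows "adj A \<psi> = \<phi>"
  unfolding adj_def
proof (rule the_equality)
  show "\<phi> \<in> ell2 \<and> (\<forall>w\<in>ell2. l2inner \<phi> w = l2inner \<psi> (A w))"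
    using assms by blast
next
  fix \<phi>' assume \<phi>': "\<phi>' \<in> ell2 \<and> (\<forall>w\<in>ell2. l2inner \<phi>' w = l2inner \<psi> (A w))"
  show "\<phi>' = \<phi>"
  proof
    fix k
    have "cnj (\<phi>' k) = cnj (\<phi> k)"
      using \<phi>' assms(2)[OF basis_ell2] basis_ell2 by (simp add: l2inner_basis_right[symmetric])
    then show "\<phi>' k = \<phi> k"
      by simp
  qed
qed

section \<open>The potential, the Hamiltonians and their propagators\<close>

lemma Vop_basis: "Vop V (basis j) = (\<lambda>m. of_real (1 / sqrt (2 * pi)) * Vhat V (m - j))"
  unfolding Vop_def by (subst infsum_eq_sum_support[of "{j}"]) (auto simp: basis_def)

lemma Vop_basis_ell2:
  assumes "(\<lambda>m. (cmod (Vhat V m))\<^sup>2) summable_on UNIV"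
  shows "Vop V (basis j) \<in> ell2" and "l2norm (Vop V (basis j)) \<le> norm0 V"
proof -
  have Vhat: "Vhat V \<in> ell2"
    using assms by (simp add: ell2_iff)
  then show "Vop V (basis j) \<in> ell2"
    unfolding Vop_basis by (intro ell2_scale ell2_shift)
  have "(cmod (Vop V (basis j) m))\<^sup>2 = 1 / (2 * pi) * (cmod (Vhat V (m - j)))\<^sup>2" for m
    by (simp add: Vop_basis norm_divide power_divide)
  then have "l2norm (Vop V (basis j)) = sqrt (\<Sum>\<^sub>\<infinity>m. 1 / (2 * pi) * (cmod (Vhat V (m - j)))\<^sup>2)"
    unfolding l2norm_def by presburger
  also have "\<dots> = sqrt (1 / (2 * pi) * (\<Sum>\<^sub>\<infinity>m. (cmod (Vhat V (m - j)))\<^sup>2))"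
    using assms summable_on_shift(1)[of "\<lambda>m. (cmod (Vhat V m))\<^sup>2" j]
    by (subst infsum_cmult_right) auto
  also have "\<dots> = norm0 V / sqrt (2 * pi)"
    using summable_on_shift(2)[of "\<lambda>m. (cmod (Vhat V m))\<^sup>2" j]
    by (simp add: norm0_def real_sqrt_mult real_sqrt_divide)
  also have "\<dots> \<le> norm0 V"
    using pi_gt3 by (intro frac_le[of _ _ 1, simplified]) (simp_all add: norm0_def infsum_nonneg)
  finally show "l2norm (Vop V (basis j)) \<le> norm0 V" .
qed

lemma Vop_two_point:
  assumes "\<And>m. m \<noteq> k \<Longrightarrow> m \<noteq> k' \<Longrightarrow> X m = 0" "k \<noteq> k'"
  shows "Vop V X = (\<lambda>m. of_real (1 / sqrt (2 * pi)) * (Vhat V (m - k) * X k + Vhat V (m - k') * X k'))"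
  unfolding Vop_def by (subst infsum_eq_sum_support[of "{k, k'}"]) (use assms in auto)

lemma Vop_two_point_ell2:
  assumes "\<And>m. m \<noteq> k \<Longrightarrow> m \<noteq> k' \<Longrightarrow> X m = 0" "k \<noteq> k'"
    and "(\<lambda>m. (cmod (Vhat V m))\<^sup>2) summable_on UNIV"
  shows "Vop V X \<in> ell2"
proof -
  have "Vhat V \<in> ell2"
    using assms(3) by (simp add: ell2_iff)
  then have "(\<lambda>m. Vhat V (m - k) * X k) \<in> ell2" for k
    using ell2_scale[OF ell2_shift[of "Vhat V" k], of "X k"] by (simp add: mult.commute)
  then have "(\<lambda>m. of_real (1 / sqrt (2 * pi)) * (Vhat V (m - k) * X k + Vhat V (m - k') * X k')) \<in> ell2"
    by (intro ell2_scale ell2_add)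
  moreover have "Vop V X = (\<lambda>m. of_real (1 / sqrt (2 * pi)) * (Vhat V (m - k) * X k + Vhat V (m - k') * X k'))"
    by (rule Vop_two_point) (use assms in auto)
  ultimately show ?thesis
    by simp
qed

lemma l2inner_H0_basis: "l2inner (H0 t (basis j)) u = of_real (Em j t) * u j"
  unfolding l2inner_def H0_def by (subst infsum_eq_sum_support[of "{j}"]) (auto simp: basis_def)

lemma l2inner_Hop_basis:
  assumes "u \<in> ell2" "(\<lambda>m. (cmod (Vhat V m))\<^sup>2) summable_on UNIV"
  shows "l2inner (Hop V t (basis j)) u = of_real (Em j t) * u j + l2inner (Vop V (basis j)) u"
proof -
  have "(\<lambda>m. cnj (H0 t (basis j) m) * u m) summable_on UNIV"
    by (rule finite_nonzero_values_imp_summable_on, rule finite_subset[of _ "{j}"])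
      (auto simp: H0_def basis_def)
  moreover have "(\<lambda>m. cnj (Vop V (basis j) m) * u m) summable_on UNIV"
    by (rule abs_summable_summable, rule l2inner_abs_summable[OF Vop_basis_ell2(1)[OF assms(2)] assms(1)])
  ultimately have "l2inner (Hop V t (basis j)) u = l2inner (H0 t (basis j)) u + l2inner (Vop V (basis j)) u"
    unfolding l2inner_def Hop_def by (simp add: distrib_right infsum_add)
  then show ?thesis
    by (simp add: l2inner_H0_basis)
qed

lemma norm_propagator_coefficient_le:
  assumes "propagator H U" "\<psi> \<in> ell2"
  shows "cmod (U t \<psi> j) \<le> l2norm \<psi>"
proof -
  have "unitary_op (U t)"
    using assms(1) by (simp add: propagator_def)
  then show ?thesis
    using norm_le_l2norm[OF unitary_op_ell2] unitary_op_l2norm assms(2) by metis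
qed

text \<open>\<open>free_phase m\<close> is the primitive of \<open>Em m\<close> vanishing at \<open>0\<close>.\<close>
definition free_phase :: "int \<Rightarrow> real \<Rightarrow> real" where
  "free_phase m t = ((real_of_int m + t) ^ 3 - (real_of_int m) ^ 3) / 3"

lemma free_phase_has_vector_derivative:
  "((\<lambda>s. exp (\<i> * of_real (free_phase m s))) has_vector_derivative
     \<i> * of_real (Em m t) * exp (\<i> * of_real (free_phase m t))) (at t)"
proof -
  have "((\<lambda>z. exp (\<i> * (((of_int m + z) ^ 3 - (of_int m) ^ 3) / 3))) has_field_derivative
          exp (\<i> * (((of_int m + of_real t) ^ 3 - (of_int m) ^ 3) / 3)) * (\<i> * (3 * (of_int m + of_real t)\<^sup>2 / 3)))
        (at (of_real t))"
    by (auto intro!: derivative_eq_intros)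
  from has_vector_derivative_real_field[OF this] show ?thesis
    by (simp add: free_phase_def Em_def algebra_simps)
qed

lemma exp_free_phase_resonance:
  fixes n l :: int
  defines "N \<equiv> real_of_int (2 * n + l)" and "x0 \<equiv> real_of_int l / 2"
  shows "exp (\<i> * of_real (free_phase n t))
    = exp (\<i> * of_real (N * (t - x0)\<^sup>2)) * exp (- \<i> * of_real (N * x0\<^sup>2))
      * exp (\<i> * of_real (free_phase (- n - l) t))"
proof -
  have phase: "free_phase n t = N * (t - x0)\<^sup>2 - N * x0\<^sup>2 + free_phase (- n - l) t"
    unfolding free_phase_def N_def x0_def by (simp add: field_simps power2_eq_square power3_eq_cube)
  have "exp (\<i> * of_real (free_phase n t))
      = exp (\<i> * of_real (N * (t - x0)\<^sup>2) + - \<i> * of_real (N * x0\<^sup>2) + \<i> * of_real (free_phase (- n - l) t))"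
    unfolding phase by (simp add: algebra_simps)
  then show ?thesis
    by (simp only: exp_add)
qed

lemma free_propagator_eq:
  assumes U0: "propagator H0 U0" and \<psi>: "\<psi> \<in> ell2"
  shows "U0 t \<psi> m = exp (- \<i> * of_real (free_phase m t)) * \<psi> m"
proof -
  define F where "F s = exp (\<i> * of_real (free_phase m s)) * U0 s \<psi> m" for s
  have "(F has_vector_derivative 0) (at s)" for s
  proof -
    have "((\<lambda>s. U0 s \<psi> m) has_vector_derivative - \<i> * (of_real (Em m s) * U0 s \<psi> m)) (at s)"
      using U0 \<psi> by (auto simp: propagator_def l2inner_H0_basis)
    from has_vector_derivative_mult[OF free_phase_has_vector_derivative[of m] this]
    show ?thesis
      unfolding F_def[abs_def] by (simp add: algebra_simps)
  qed
  then have "F t = F 0"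
    using has_vector_derivative_zero_constant[of UNIV F] by (metis UNIV_I convex_UNIV)
  also have "F 0 = \<psi> m"
    using U0 \<psi> by (simp add: F_def free_phase_def propagator_def)
  finally have "exp (- \<i> * of_real (free_phase m t)) * F t = exp (- \<i> * of_real (free_phase m t)) * \<psi> m"
    by simp
  then show ?thesis
    by (simp add: F_def mult.assoc[symmetric] exp_add[symmetric])
qed

lemma adj_free_propagator:
  assumes U0: "propagator H0 U0" and Z: "Z \<in> ell2"
  shows "adj (U0 t) Z = (\<lambda>m. exp (\<i> * of_real (free_phase m t)) * Z m)"
proof (rule adj_eqI)
  show "(\<lambda>m. exp (\<i> * of_real (free_phase m t)) * Z m) \<in> ell2"
    using Z by (rule ell2_mult_unimodular) simp
  show "l2inner (\<lambda>m. exp (\<i> * of_real (free_phase m t)) * Z m) w = l2inner Z (U0 t w)"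
    if "w \<in> ell2" for w
    unfolding l2inner_def free_propagator_eq[OF U0 that] by (simp add: exp_cnj mult_ac)
qed

lemma interaction_coefficient:
  assumes U: "propagator (Hop V) U" and \<psi>: "\<psi> \<in> ell2" "l2norm \<psi> \<le> 1"
    and Vhat: "(\<lambda>m. (cmod (Vhat V m))\<^sup>2) summable_on UNIV"
  obtains a' where
    "\<And>t. ((\<lambda>s. exp (\<i> * of_real (free_phase j s)) * U s \<psi> j) has_vector_derivative a' t) (at t)"
    "\<And>t. cmod (exp (\<i> * of_real (free_phase j t)) * U t \<psi> j) \<le> 1"
    "\<And>t. cmod (a' t) \<le> norm0 V"
proof
  fix t
  have Ut: "unitary_op (U t)"
    using U by (simp add: propagator_def)
  have "((\<lambda>s. U s \<psi> j) has_vector_derivative - \<i> * l2inner (Hop V t (basis j)) (U t \<psi>)) (at t)"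
    using U \<psi> unfolding propagator_def by blast
  then have "((\<lambda>s. U s \<psi> j) has_vector_derivative
      - \<i> * (of_real (Em j t) * U t \<psi> j + l2inner (Vop V (basis j)) (U t \<psi>))) (at t)"
    by (simp only: l2inner_Hop_basis[OF unitary_op_ell2[OF Ut \<psi>(1)] Vhat])
  from has_vector_derivative_mult[OF free_phase_has_vector_derivative[of j] this]
  show "((\<lambda>s. exp (\<i> * of_real (free_phase j s)) * U s \<psi> j) has_vector_derivative
      - \<i> * exp (\<i> * of_real (free_phase j t)) * l2inner (Vop V (basis j)) (U t \<psi>)) (at t)"
    by (simp add: algebra_simps)
  show "cmod (exp (\<i> * of_real (free_phase j t)) * U t \<psi> j) \<le> 1"
    using norm_propagator_coefficient_le[OF U \<psi>(1), of t j] \<psi>(2) by (simp add: norm_mult)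
  have "cmod (l2inner (Vop V (basis j)) (U t \<psi>)) \<le> l2norm (Vop V (basis j)) * l2norm (U t \<psi>)"
    by (rule norm_l2inner_le[OF Vop_basis_ell2(1)[OF Vhat] unitary_op_ell2[OF Ut \<psi>(1)]])
  also have "\<dots> \<le> norm0 V * 1"
    using unitary_op_l2norm[OF Ut \<psi>(1)] \<psi>(2) Vop_basis_ell2(2)[OF Vhat]
    by (intro mult_mono) (auto simp: l2norm_nonneg norm0_def infsum_nonneg)
  finally show "cmod (- \<i> * exp (\<i> * of_real (free_phase j t)) * l2inner (Vop V (basis j)) (U t \<psi>)) \<le> norm0 V"
    by (simp add: norm_mult)
qed

section \<open>The resonant term\<close>

lemma resonant_integrand_eq:
  assumes U0: "propagator H0 U0" and U: "propagator (Hop V) U" and \<psi>: "\<psi> \<in> ell2"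
    and Vhat: "(\<lambda>m. (cmod (Vhat V m))\<^sup>2) summable_on UNIV" and V0: "Vhat V 0 = 0"
    and nl: "n \<noteq> - n - l"
  shows "l2inner \<phi> (Pm n (adj (U0 t) (Vop V (U0 t (Pnl n l (adj (U0 t) (U t \<psi>)))))))
    = cnj (\<phi> n) * of_real (1 / sqrt (2 * pi)) * Vhat V (2 * n + l)
      * exp (\<i> * of_real (free_phase n t)) * U t \<psi> (- n - l)"
proof -
  define j where "j = - n - l"
  have Ut: "unitary_op (U t)"
    using U by (simp add: propagator_def)
  define Y where "Y = Pnl n l (adj (U0 t) (U t \<psi>))"
  have Y: "Y m = (if m = n \<or> m = j then exp (\<i> * of_real (free_phase m t)) * U t \<psi> m else 0)" for m
    using nl unfolding Y_def Pnl_def Pm_def j_def adj_free_propagator[OF U0 unitary_op_ell2[OF Ut \<psi>]]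
    by auto
  have "Y \<in> ell2"
    by (rule ell2_finite_support[of "{n, j}"]) (auto simp: Y)
  then have X: "U0 t Y m = (if m = n \<or> m = j then U t \<psi> m else 0)" for m
    by (simp add: free_propagator_eq[OF U0] Y mult.assoc[symmetric] exp_add[symmetric])
  have "Vop V (U0 t Y) = (\<lambda>m. of_real (1 / sqrt (2 * pi)) * (Vhat V (m - n) * U0 t Y n + Vhat V (m - j) * U0 t Y j))"
    using nl by (intro Vop_two_point) (auto simp: X j_def)
  then have "Vop V (U0 t Y) n = of_real (1 / sqrt (2 * pi)) * Vhat V (2 * n + l) * U t \<psi> j"
    using V0 by (simp add: X j_def)
  moreover have "Vop V (U0 t Y) \<in> ell2"
    using nl by (intro Vop_two_point_ell2[where k = n and k' = j] Vhat) (auto simp: X j_def)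
  ultimately show ?thesis
    by (simp add: Y_def j_def l2inner_Pm adj_free_propagator[OF U0] mult_ac)
qed

lemma resonant_integral_bound:
  fixes n l :: int
  assumes Vhat: "(\<lambda>m. (cmod (Vhat V m))\<^sup>2) summable_on UNIV" and V0: "Vhat V 0 = 0"
    and nl: "2 * n + l \<ge> 1" and U0: "propagator H0 U0" and U: "propagator (Hop V) U"
    and s: "s1 \<le> s2" "s2 - s1 \<le> 1"
    and \<phi>: "\<phi> \<in> ell2" "l2norm \<phi> \<le> 1" and \<psi>: "\<psi> \<in> ell2" "l2norm \<psi> \<le> 1"
  shows "(\<lambda>t. l2inner \<phi> (Pm n (adj (U0 t) (Vop V (U0 t (Pnl n l (adj (U0 t) (U t \<psi>))))))))
           integrable_on {s1..s2} \<and>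
         cmod (integral {s1..s2}
           (\<lambda>t. l2inner \<phi> (Pm n (adj (U0 t) (Vop V (U0 t (Pnl n l (adj (U0 t) (U t \<psi>)))))))))
         \<le> 5 * sqrt (1 + norm0 V) * cmod (Vhat V (2 * n + l)) / sqrt (real_of_int (2 * n + l))"
proof -
  define N where "N = real_of_int (2 * n + l)"
  define x0 where "x0 = real_of_int l / 2"
  define c where "c = cnj (\<phi> n) * of_real (1 / sqrt (2 * pi)) * Vhat V (2 * n + l) * exp (- \<i> * of_real (N * x0\<^sup>2))"
  define a where "a t = exp (\<i> * of_real (free_phase (- n - l) t)) * U t \<psi> (- n - l)" for t
  define h where "h t = exp (\<i> * of_real (N * (t - x0)\<^sup>2)) * a t" for t
  have integrand: "l2inner \<phi> (Pm n (adj (U0 t) (Vop V (U0 t (Pnl n l (adj (U0 t) (U t \<psi>)))))))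
      = c * h t" for t
    using nl exp_free_phase_resonance[where n = n and l = l and t = t]
    by (simp add: resonant_integrand_eq[OF U0 U \<psi>(1) Vhat V0] N_def x0_def c_def h_def a_def mult_ac)
  obtain a' where "\<And>t. (a has_vector_derivative a' t) (at t)" "\<And>t. norm (a t) \<le> 1" "\<And>t. norm (a' t) \<le> norm0 V"
    unfolding a_def using interaction_coefficient[OF U \<psi> Vhat] by blast
  moreover have "N > 0" "norm0 V \<ge> 0"
    using nl by (simp_all add: N_def norm0_def infsum_nonneg)
  ultimately have h: "h integrable_on {s1..s2} \<and> norm (integral {s1..s2} h) \<le> 5 * sqrt (1 + norm0 V) / sqrt N"
    unfolding h_def using chirp_integral_bound[OF _ _ s] by blast
  have "cmod (\<phi> n) \<le> 1" "1 / sqrt (2 * pi) \<le> 1"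
    using norm_le_l2norm[OF \<phi>(1), of n] \<phi>(2) pi_gt3 by auto
  then have "cmod (\<phi> n) * (1 / sqrt (2 * pi)) * cmod (Vhat V (2 * n + l)) \<le> 1 * 1 * cmod (Vhat V (2 * n + l))"
    by (intro mult_right_mono mult_mono) auto
  then have c: "cmod c \<le> cmod (Vhat V (2 * n + l))"
    by (simp add: c_def norm_mult norm_divide)
  have "cmod (integral {s1..s2} (\<lambda>t. c * h t)) = cmod c * norm (integral {s1..s2} h)"
    by (simp add: norm_mult)
  also have "\<dots> \<le> cmod (Vhat V (2 * n + l)) * (5 * sqrt (1 + norm0 V) / sqrt N)"
    using c h by (intro mult_mono) auto
  finally show ?thesis
    using h by (simp only: integrand) (simp add: N_def integrable_on_mult_right mult_ac)
qed

theorem lemma1: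
  shows "\<exists>c>0. \<forall>(V::real \<Rightarrow> real) (n::int) (l::int) U0 U (s1::real) s2.
    (\<forall>x. V (x + 2 * pi) = V x) \<and>
    V absolutely_integrable_on {0..2*pi} \<and>
    (\<lambda>m. (cmod (Vhat V m))\<^sup>2) summable_on UNIV \<and>
    Vhat V 0 = 0 \<and>
    n \<ge> 0 \<and> l \<ge> 0 \<and> 2 * n + l \<ge> 1 \<and>
    propagator H0 U0 \<and> propagator (Hop V) U \<and>
    s1 < s2 \<and>
    s1 \<in> {real_of_int l / 2 - 1/4 ..< real_of_int l / 2 + 1/4} \<and>
    s2 \<in> {real_of_int l / 2 - 1/4 ..< real_of_int l / 2 + 1/4}
    \<longrightarrow>
    (\<forall>\<phi>\<in>ell2. \<forall>\<psi>\<in>ell2. l2norm \<phi> \<le> 1 \<and> l2norm \<psi> \<le> 1 \<longrightarrow>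
       (let f = (\<lambda>t. l2inner \<phi>
                  (Pm n (adj (U0 t) (Vop V (U0 t (Pnl n l (adj (U0 t) (U t \<psi>))))))))
        in f integrable_on {s1..s2} \<and>
           cmod (integral {s1..s2} f)
             \<le> c * sqrt (1 + norm0 V) * cmod (Vhat V (2 * n + l))
                 / sqrt (real_of_int (2 * n + l))))"
  by (intro exI[of _ "5::real"] conjI allI impI ballI, simp, unfold Let_def,
      rule resonant_integral_bound) auto

end
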